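(* Let $m,n\ge1$ and let $\lambda\subseteq\nu\subseteq(n-1)^{m-1}$ be partitions. Then $\mathrm{PASM}(\nu/\lambda,m,n)$ is a face of $\mathrm{PASM}(m,n)$, of dimension $|\nu|-|\lambda|$.
   Context: A partition $\mu=(\mu_1\ge\mu_2\ge\cdots)$ is a weakly decreasing sequence of nonnegative integers with finitely many nonzero terms, $|\mu|=\sum_i\mu_i$, and $\ell(\mu)$ is its number of positive parts. We write $\mu\subseteq\nu$ if $\mu_i\le\nu_i$ for all $i$, and $\mu\subseteq a^b$ if $\ell(\mu)\le b$ and $\mu_1\le a$. An $m\times n$ partial alternating sign matrix is an $m\times n$ matrix $M$ with entries in $\{-1,0,1\}$ such that $\sum_{i'=1}^{i}M_{i'j}\in\{0,1\}$ and $\sum_{j'=1}^{j}M_{ij'}\in\{0,1\}$ for all $i,j$; $\mathrm{PASM}(m,n)$ is the convex hull in $\mathbb{R}^{mn}$ of all $m\times n$ partial alternating sign matrices. For $\mu\subseteq(n-1)^{m-1}$, the $m\times n$ matrix $M^\mu$ has entries $M^\mu_{1,\mu_1+1}=1$; for each $1\le k\le m-1$ with $\mu_k>\mu_{k+1}$, $M^\mu_{k+1,\mu_{k+1}+1}=1$ and $M^\mu_{k+1,\mu_k+1}=-1$; all other entries $0$. $\mathrm{PASM}(\nu/\lambda,m,n)$ is the convex hull in $\mathbb{R}^{mn}$ of $\{M^\mu:\lambda\subseteq\mu\subseteq\nu\}$. *)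

theory Defs
  imports "HOL-Analysis.Analysis"
begin

text \<open>Partitions are encoded 0-indexed: the function mu :: nat => nat has
  mu 0 = mu_1, mu 1 = mu_2, ...\<close>

definition is_partition :: "(nat \<Rightarrow> nat) \<Rightarrow> bool" where
  "is_partition mu \<longleftrightarrow> (\<forall>i j. i \<le> j \<longrightarrow> mu j \<le> mu i) \<and> finite {i. mu i \<noteq> 0}"

definition psize :: "(nat \<Rightarrow> nat) \<Rightarrow> nat" where
  "psize mu = (\<Sum>i\<in>{i. mu i \<noteq> 0}. mu i)"

definition psubseteq :: "(nat \<Rightarrow> nat) \<Rightarrow> (nat \<Rightarrow> nat) \<Rightarrow> bool" where
  "psubseteq mu nu \<longleftrightarrow> (\<forall>i. mu i \<le> nu i)"

text \<open>mu contained in the rectangle a^b: at most b positive parts and mu_1 <= a.\<close>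
definition in_rect :: "(nat \<Rightarrow> nat) \<Rightarrow> nat \<Rightarrow> nat \<Rightarrow> bool" where
  "in_rect mu a b \<longleftrightarrow> card {i. 0 < mu i} \<le> b \<and> mu 0 \<le> a"

definition rk :: "'a::{finite,linorder} \<Rightarrow> nat" where
  "rk x = card {y. y < x}"

definition is_pasm :: "real^'n::{finite,linorder}^'m::{finite,linorder} \<Rightarrow> bool" where
  "is_pasm M \<longleftrightarrow>
     (\<forall>i j. M$i$j \<in> {-1,0,1}) \<and>
     (\<forall>i j. (\<Sum>i'\<in>{..i}. M$i'$j) \<in> {0,1}) \<and>
     (\<forall>i j. (\<Sum>j'\<in>{..j}. M$i$j') \<in> {0,1})"

definition PASM :: "(real^'n::{finite,linorder}^'m::{finite,linorder}) set" where
  "PASM = convex hull {M. is_pasm M}"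

text \<open>Entries of M^mu with 0-based row r and column c:
  row 0 has a 1 in column mu_1; row r >= 1 (i.e. row k+1 with k = r) has, if
  mu_k > mu_(k+1), a 1 in column mu_(k+1) and a -1 in column mu_k.\<close>
definition Mmu_entry :: "(nat \<Rightarrow> nat) \<Rightarrow> nat \<Rightarrow> nat \<Rightarrow> real" where
  "Mmu_entry mu r c =
     (if r = 0 then (if c = mu 0 then 1 else 0)
      else if mu r < mu (r - 1) then
        (if c = mu r then 1 else if c = mu (r - 1) then -1 else 0)
      else 0)"

definition Mmu :: "(nat \<Rightarrow> nat) \<Rightarrow> real^'n::{finite,linorder}^'m::{finite,linorder}" where
  "Mmu mu = (\<chi> i j. Mmu_entry mu (rk i) (rk j))"

definition PASM_skew :: "(nat \<Rightarrow> nat) \<Rightarrow> (nat \<Rightarrow> nat) \<Rightarrow> (real^'n::{finite,linorder}^'m::{finite,linorder}) set" where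
  "PASM_skew lam nu = convex hull {Mmu mu | mu. is_partition mu \<and> psubseteq lam mu \<and> psubseteq mu nu}"

end

theory Submission
  imports Defs
begin

(*
  The linear functional

    f(A) = (total of row 1) - (totals of rows 2..m)
           - (sum of the column partial sums of A over the cells outside nu/lambda)

  is at most 1 on every PASM, since row totals and column partial sums of a PASM lie in {0,1}.
  Equality forces row 1 to sum to 1, all other rows to 0, and every column partial sum outside
  nu/lambda to vanish. The column partial sums of each row r are then the indicator of a single
  column mu_r; the row partial sums lying in {0,1} make mu weakly decreasing, and the vanishing
  outside nu/lambda gives lambda <= mu <= nu, i.e. A = M^mu. So PASM(nu/lambda) is the exposed face
  {f = 1} of PASM(m,n).

  For the dimension, the injective linear map taking A to its matrix of corner sums
  sum_{i' <= i, j' <= j} A_{i'j'} sends M^mu to the 0/1 matrix with ones exactly at the cells (i,j)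
  with mu_i <= j. Differences of these matrices are sums of unit matrices at cells of nu/lambda,
  and each such unit matrix is the difference for two partitions that differ in a single cell.
  Hence the affine hull has dimension |nu| - |lambda|, the number of cells of nu/lambda.
*)

section \<open>Supporting hyperplanes of convex hulls\<close>

lemma convex_hull_Int_supporting_hyperplane:
  fixes P :: "'a::euclidean_space set"
  assumes "\<And>x. x \<in> P \<Longrightarrow> a \<bullet> x \<le> b"
  shows "convex hull (P \<inter> {x. a \<bullet> x = b}) = convex hull P \<inter> {x. a \<bullet> x = b}"
proof
  have "convex hull (P \<inter> {x. a \<bullet> x = b}) \<subseteq> convex hull P"
    by (rule hull_mono) blast
  moreover have "convex hull (P \<inter> {x. a \<bullet> x = b}) \<subseteq> {x. a \<bullet> x = b}"
    by (rule hull_minimal) (auto simp: convex_hyperplane)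
  ultimately show "convex hull (P \<inter> {x. a \<bullet> x = b}) \<subseteq> convex hull P \<inter> {x. a \<bullet> x = b}"
    by blast
  show "convex hull P \<inter> {x. a \<bullet> x = b} \<subseteq> convex hull (P \<inter> {x. a \<bullet> x = b})"
  proof
    fix x assume x: "x \<in> convex hull P \<inter> {x. a \<bullet> x = b}"
    then obtain S where S: "finite S" "S \<subseteq> P" "x \<in> convex hull S"
      using caratheodory by blast
    have "convex hull S \<subseteq> {x. a \<bullet> x \<le> b}"
      using S(2) assms by (intro hull_minimal) (auto simp: convex_halfspace_le)
    then have "(convex hull S \<inter> {x. a \<bullet> x = b}) face_of convex hull S"
      by (intro face_of_Int_supporting_hyperplane_le) auto
    then obtain T where T: "T \<subseteq> S" "convex hull S \<inter> {x. a \<bullet> x = b} = convex hull T"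
      using face_of_convex_hull_subset[OF finite_imp_compact[OF S(1)]] by metis
    then have "T \<subseteq> P \<inter> {x. a \<bullet> x = b}"
      using S(2) hull_subset[of T convex] by blast
    then show "x \<in> convex hull (P \<inter> {x. a \<bullet> x = b})"
      using x S(3) T(2) hull_mono by blast
  qed
qed

lemma face_of_convex_hull_Int_supporting_hyperplane:
  fixes P :: "'a::euclidean_space set"
  assumes "\<And>x. x \<in> P \<Longrightarrow> a \<bullet> x \<le> b"
  shows "convex hull (P \<inter> {x. a \<bullet> x = b}) face_of convex hull P"
proof -
  have "convex hull P \<subseteq> {x. a \<bullet> x \<le> b}"
    using assms by (intro hull_minimal) (auto simp: convex_halfspace_le)
  then have "(convex hull P \<inter> {x. a \<bullet> x = b}) face_of convex hull P"
    by (intro face_of_Int_supporting_hyperplane_le) auto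
  then show ?thesis
    by (simp add: convex_hull_Int_supporting_hyperplane[OF assms])
qed

section \<open>Ranks in a finite linear order\<close>

lemma strict_mono_rk: "strict_mono (rk :: 'a::{finite,linorder} \<Rightarrow> nat)"
  unfolding strict_mono_def rk_def by (auto intro: psubset_card_mono)

lemma inj_rk: "inj (rk :: 'a::{finite,linorder} \<Rightarrow> nat)"
  using strict_mono_rk by (rule strict_mono_imp_inj_on)

lemma rk_less_card: "rk (x::'a::{finite,linorder}) < CARD('a)"
  unfolding rk_def by (rule psubset_card_mono) auto

lemma range_rk: "range (rk :: 'a::{finite,linorder} \<Rightarrow> nat) = {..<CARD('a)}"
proof (rule card_subset_eq)
  show "range (rk :: 'a \<Rightarrow> nat) \<subseteq> {..<CARD('a)}"
    using rk_less_card by blast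
  show "card (range (rk :: 'a \<Rightarrow> nat)) = card {..<CARD('a)}"
    using card_image[OF inj_rk] by simp
qed simp

lemma rk_inv_rk: "r < CARD('a::{finite,linorder}) \<Longrightarrow> rk (inv rk r :: 'a) = r"
  by (simp add: f_inv_into_f range_rk)

lemma rk_image_atMost: "rk ` {..x::'a::{finite,linorder}} = {..rk x}"
proof
  show "rk ` {..x} \<subseteq> {..rk x}"
    by (auto simp: strict_mono_less_eq[OF strict_mono_rk])
  show "{..rk x} \<subseteq> rk ` {..x}"
  proof
    fix r assume r: "r \<in> {..rk x}"
    then have "r < CARD('a)" using rk_less_card[of x] by simp
    then have "rk (inv rk r :: 'a) = r" by (rule rk_inv_rk)
    with r show "r \<in> rk ` {..x}"
      by (metis atMost_iff image_eqI strict_mono_less_eq[OF strict_mono_rk])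
  qed
qed

lemma sum_UNIV_rk:
  "(\<Sum>x\<in>(UNIV::'a::{finite,linorder} set). g (rk x)) = (\<Sum>r<CARD('a). g r)"
proof -
  have "sum g (range (rk :: 'a \<Rightarrow> nat)) = (\<Sum>x\<in>(UNIV::'a set). g (rk x))"
    by (simp add: sum.reindex[OF inj_rk])
  then show ?thesis by (simp add: range_rk)
qed

lemma sum_atMost_rk: "(\<Sum>y\<le>x::'a::{finite,linorder}. g (rk y)) = (\<Sum>r\<le>rk x. g r)"
  using sum.reindex[OF inj_on_subset[OF inj_rk], of "{..x}" g] by (simp add: rk_image_atMost)

lemma all_rk_iff: "(\<forall>x::'a::{finite,linorder}. P (rk x)) \<longleftrightarrow> (\<forall>r<CARD('a). P r)"
  using range_rk[where 'a='a] by (metis UNIV_I image_eqI imageE lessThan_iff)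

lemma card_rk_interval:
  assumes "b \<le> CARD('a::{finite,linorder})"
  shows "card {x::'a. a \<le> rk x \<and> rk x < b} = b - a"
proof -
  have "{x::'a. a \<le> rk x \<and> rk x < b} = rk -` {a..<b}" by auto
  moreover have "{a..<b} \<subseteq> range (rk :: 'a \<Rightarrow> nat)"
    using assms by (auto simp: range_rk)
  ultimately show ?thesis by (simp add: card_vimage_inj[OF inj_rk])
qed

section \<open>Partitions and the matrices M^mu\<close>

lemma is_partition_antimono: "is_partition mu \<Longrightarrow> i \<le> j \<Longrightarrow> mu j \<le> mu i"
  unfolding is_partition_def by blast

lemma in_rect_partition_le: "is_partition mu \<Longrightarrow> in_rect mu a b \<Longrightarrow> mu r \<le> a"
  unfolding in_rect_def using is_partition_antimono[of mu 0 r] by simp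

lemma in_rect_partition_eq_0:
  assumes mu: "is_partition mu" and "in_rect mu a b" and "b \<le> r"
  shows "mu r = 0"
proof (rule ccontr)
  assume "mu r \<noteq> 0"
  then have "{..r} \<subseteq> {i. 0 < mu i}"
    using is_partition_antimono[OF mu] by (fastforce intro: gr0I)
  moreover have "finite {i. 0 < mu i}"
    using mu unfolding is_partition_def by simp
  ultimately have "card {..r} \<le> card {i. 0 < mu i}"
    by (rule card_mono[rotated])
  then show False using assms unfolding in_rect_def by simp
qed

lemma psize_eq_sum_lessThan:
  assumes "\<And>r. m \<le> r \<Longrightarrow> mu r = 0"
  shows "psize mu = (\<Sum>r<m. mu r)"
proof -
  have "r < m" if "mu r \<noteq> 0" for r
    using assms[of r] that by (cases "m \<le> r") auto
  then have "{r. mu r \<noteq> 0} \<subseteq> {..<m}"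
    by blast
  then show ?thesis
    unfolding psize_def by (intro sum.mono_neutral_right[symmetric]) auto
qed

lemma is_partition_truncate:
  assumes "\<And>r. 0 < r \<Longrightarrow> r < m \<Longrightarrow> p r \<le> p (r - 1)"
  shows "is_partition (\<lambda>r. if r < m then p r else 0)"
proof -
  have "antimono (\<lambda>r. if r < m then p r else 0)"
    unfolding antimono_iff_le_Suc using assms[of "Suc _"] by auto
  moreover have "finite {r. (if r < m then p r else 0) \<noteq> 0}"
    by (rule finite_subset[of _ "{..<m}"]) auto
  ultimately show ?thesis
    unfolding is_partition_def by (simp add: antimono_def)
qed

lemma Mmu_entry_eq_diff:
  assumes "0 < r \<Longrightarrow> mu r \<le> mu (r - 1)"
  shows "Mmu_entry mu r c = of_bool (c = mu r) - of_bool (0 < r \<and> c = mu (r - 1))"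
  using assms unfolding Mmu_entry_def by (cases "r = 0") auto

lemma partition_Mmu_entry_eq_diff:
  "is_partition mu \<Longrightarrow> Mmu_entry mu r c = of_bool (c = mu r) - of_bool (0 < r \<and> c = mu (r - 1))"
  by (rule Mmu_entry_eq_diff) (simp add: is_partition_antimono)

lemma sum_Mmu_entry_row_prefix:
  "is_partition mu \<Longrightarrow>
     (\<Sum>c'\<le>c. Mmu_entry mu r c') = of_bool (mu r \<le> c) - of_bool (0 < r \<and> mu (r - 1) \<le> c)"
  by (simp add: partition_Mmu_entry_eq_diff sum_subtractf of_bool_conj sum_distrib_left[symmetric])

lemma sum_Mmu_entry_row_total:
  "is_partition mu \<Longrightarrow>
     (\<Sum>c<n. Mmu_entry mu r c) = of_bool (mu r < n) - of_bool (0 < r \<and> mu (r - 1) < n)"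
  by (simp add: partition_Mmu_entry_eq_diff sum_subtractf of_bool_conj sum_distrib_left[symmetric])

lemma sum_Mmu_entry_column_prefix:
  "is_partition mu \<Longrightarrow> (\<Sum>r'\<le>r. Mmu_entry mu r' c) = of_bool (c = mu r)"
  by (induction r) (simp_all add: partition_Mmu_entry_eq_diff)

lemma sum_Mmu_entry_corner:
  assumes "is_partition mu"
  shows "(\<Sum>r'\<le>r. \<Sum>c'\<le>c. Mmu_entry mu r' c') = of_bool (mu r \<le> c)"
proof -
  have "(\<Sum>r'\<le>r. \<Sum>c'\<le>c. Mmu_entry mu r' c') = (\<Sum>c'\<le>c. \<Sum>r'\<le>r. Mmu_entry mu r' c')"
    by (rule sum.swap)
  also have "\<dots> = of_bool (mu r \<le> c)"
    by (simp add: sum_Mmu_entry_column_prefix[OF assms])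
  finally show ?thesis .
qed

section \<open>The supporting functional\<close>

lemma sum_zero_one_eq_one_obtains:
  fixes g :: "'a \<Rightarrow> real"
  assumes "finite S" and g01: "\<And>x. x \<in> S \<Longrightarrow> g x \<in> {0, 1}" and sum: "sum g S = 1"
  obtains p where "p \<in> S" "\<And>x. x \<in> S \<Longrightarrow> g x = of_bool (x = p)"
proof -
  have "\<exists>p\<in>S. g p \<noteq> 0"
  proof (rule ccontr)
    assume "\<not> (\<exists>p\<in>S. g p \<noteq> 0)"
    then have "sum g S = 0" by simp
    with sum show False by simp
  qed
  then obtain p where p: "p \<in> S" "g p = 1"
    using g01 by blast
  have "g x = 0" if x: "x \<in> S" "x \<noteq> p" for x
  proof -
    have "sum g {x, p} \<le> sum g S"
      by (rule sum_mono2) (use assms x p in \<open>auto dest!: g01\<close>)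
    then show ?thesis using g01[OF x(1)] x(2) p sum by auto
  qed
  then show thesis using that p by fastforce
qed

definition pasm_array :: "nat \<Rightarrow> nat \<Rightarrow> (nat \<Rightarrow> nat \<Rightarrow> real) \<Rightarrow> bool" where
  "pasm_array m n A \<longleftrightarrow> (\<forall>r<m. \<forall>c<n. A r c \<in> {-1, 0, 1} \<and>
     (\<Sum>r'\<le>r. A r' c) \<in> {0, 1} \<and> (\<Sum>c'\<le>c. A r c') \<in> {0, 1})"

lemma pasm_array_column_prefix:
  "pasm_array m n A \<Longrightarrow> r < m \<Longrightarrow> c < n \<Longrightarrow> (\<Sum>r'\<le>r. A r' c) \<in> {0, 1}"
  unfolding pasm_array_def by blast

lemma pasm_array_row_prefix:
  "pasm_array m n A \<Longrightarrow> r < m \<Longrightarrow> c < n \<Longrightarrow> (\<Sum>c'\<le>c. A r c') \<in> {0, 1}"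
  unfolding pasm_array_def by blast

lemma pasm_array_row_total:
  assumes "pasm_array m n A" "r < m"
  shows "(\<Sum>c<n. A r c) \<in> {0, 1}"
proof (cases n)
  case (Suc k)
  then show ?thesis
    using pasm_array_row_prefix[OF assms, of k] by (simp add: lessThan_Suc_atMost)
qed simp

lemma pasm_array_Mmu_entry:
  assumes mu: "is_partition mu"
  shows "pasm_array m n (Mmu_entry mu)"
proof -
  have antimono: "mu r \<le> mu (r - 1)" for r
    using is_partition_antimono[OF mu] by simp
  then have "Mmu_entry mu r c \<in> {-1, 0, 1}" for r c
    by (simp add: partition_Mmu_entry_eq_diff[OF mu])
  moreover have "(\<Sum>c'\<le>c. Mmu_entry mu r c') \<in> {0, 1}" for r c
    using antimono[of r] by (simp add: sum_Mmu_entry_row_prefix[OF mu])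
  ultimately show ?thesis
    unfolding pasm_array_def by (simp add: sum_Mmu_entry_column_prefix[OF mu])
qed

lemma eq_column_prefix_diff:
  "A r c = (\<Sum>r'\<le>r. A r' c) - (if r = 0 then 0 else \<Sum>r'\<le>r - 1. A r' c)"
  for A :: "nat \<Rightarrow> nat \<Rightarrow> real"
  by (cases r) (simp_all add: atMost_Suc)

definition skew_functional ::
  "nat \<Rightarrow> nat \<Rightarrow> (nat \<Rightarrow> nat) \<Rightarrow> (nat \<Rightarrow> nat) \<Rightarrow> (nat \<Rightarrow> nat \<Rightarrow> real) \<Rightarrow> real" where
  "skew_functional m n lam nu A =
     (\<Sum>c<n. A 0 c) - (\<Sum>r\<in>{1..<m}. \<Sum>c<n. A r c)
     - (\<Sum>r<m. \<Sum>c<n. if c \<in> {lam r..nu r} then 0 else \<Sum>r'\<le>r. A r' c)"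

lemma skew_functional_Mmu_entry:
  assumes mu: "is_partition mu" and "psubseteq lam mu" "psubseteq mu nu" and "mu 0 < n"
  shows "skew_functional m n lam nu (Mmu_entry mu) = 1"
proof -
  have mu_n: "mu r < n" for r
    using is_partition_antimono[OF mu, of 0 r] \<open>mu 0 < n\<close> by simp
  have "(\<Sum>r\<in>{1..<m}. of_bool (mu r < n) - of_bool (0 < r \<and> mu (r - 1) < n) :: real) = 0"
    by (rule sum.neutral) (simp add: mu_n)
  moreover have "(\<Sum>r<m. \<Sum>c<n. if c \<in> {lam r..nu r} then 0 else of_bool (c = mu r) :: real) = 0"
    using assms(2,3) unfolding psubseteq_def by (intro sum.neutral ballI) auto
  ultimately show ?thesis
    unfolding skew_functional_def sum_Mmu_entry_row_total[OF mu] sum_Mmu_entry_column_prefix[OF mu]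
    by (simp add: \<open>mu 0 < n\<close>)
qed

lemma skew_functional_le_one:
  assumes A: "pasm_array m n A" and "0 < m"
  shows "skew_functional m n lam nu A \<le> 1"
proof -
  have "(\<Sum>c<n. A 0 c) \<le> 1"
    using pasm_array_row_total[OF A \<open>0 < m\<close>] by auto
  moreover have "0 \<le> (\<Sum>r\<in>{1..<m}. \<Sum>c<n. A r c)"
    by (rule sum_nonneg) (use pasm_array_row_total[OF A] in fastforce)
  moreover have "0 \<le> (\<Sum>r<m. \<Sum>c<n. if c \<in> {lam r..nu r} then 0 else \<Sum>r'\<le>r. A r' c)"
    using pasm_array_column_prefix[OF A] by (intro sum_nonneg) fastforce
  ultimately show ?thesis
    unfolding skew_functional_def by linarith
qed

lemma skew_functional_eq_one_imp:
  assumes A: "pasm_array m n A" and "0 < m" and f: "skew_functional m n lam nu A = 1"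
  shows skew_functional_eq_one_imp_first_row: "(\<Sum>c<n. A 0 c) = 1"
    and skew_functional_eq_one_imp_other_rows: "\<And>r. 0 < r \<Longrightarrow> r < m \<Longrightarrow> (\<Sum>c<n. A r c) = 0"
    and skew_functional_eq_one_imp_outside:
      "\<And>r c. r < m \<Longrightarrow> c < n \<Longrightarrow> c \<notin> {lam r..nu r} \<Longrightarrow> (\<Sum>r'\<le>r. A r' c) = 0"
proof -
  define outside where
    "outside r c = (if c \<in> {lam r..nu r} then 0 else \<Sum>r'\<le>r. A r' c)" for r c
  have rows_nonneg: "\<forall>r\<in>{1..<m}. 0 \<le> (\<Sum>c<n. A r c)"
    using pasm_array_row_total[OF A] by fastforce
  have outside_nonneg: "\<forall>(r, c)\<in>{..<m} \<times> {..<n}. 0 \<le> outside r c"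
    using pasm_array_column_prefix[OF A] by (fastforce simp: outside_def)
  have "(\<Sum>c<n. A 0 c) \<le> 1"
    using pasm_array_row_total[OF A \<open>0 < m\<close>] by auto
  moreover have "0 \<le> (\<Sum>r\<in>{1..<m}. \<Sum>c<n. A r c)"
    by (rule sum_nonneg) (use rows_nonneg in blast)
  moreover have "0 \<le> (\<Sum>(r, c)\<in>{..<m} \<times> {..<n}. outside r c)"
    using outside_nonneg by (intro sum_nonneg) auto
  moreover have "(\<Sum>c<n. A 0 c) - (\<Sum>r\<in>{1..<m}. \<Sum>c<n. A r c)
      - (\<Sum>(r, c)\<in>{..<m} \<times> {..<n}. outside r c) = 1"
    using f unfolding skew_functional_def outside_def sum.cartesian_product .
  ultimately have first_row: "(\<Sum>c<n. A 0 c) = 1"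
    and rows_sum: "(\<Sum>r\<in>{1..<m}. \<Sum>c<n. A r c) = 0"
    and outside_sum: "(\<Sum>(r, c)\<in>{..<m} \<times> {..<n}. outside r c) = 0"
    by linarith+
  show "(\<Sum>c<n. A 0 c) = 1"
    by (fact first_row)
  have "\<forall>r\<in>{1..<m}. (\<Sum>c<n. A r c) = 0"
    using sum_nonneg_eq_0_iff[of "{1..<m}" "\<lambda>r. \<Sum>c<n. A r c"] rows_nonneg rows_sum by simp
  then show "(\<Sum>c<n. A r c) = 0" if "0 < r" "r < m" for r
    using that by simp
  have outside_0: "\<forall>(r, c)\<in>{..<m} \<times> {..<n}. outside r c = 0"
    using sum_nonneg_eq_0_iff[of "{..<m} \<times> {..<n}" "\<lambda>(r, c). outside r c"] outside_nonneg outside_sum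
    by fastforce
  show "(\<Sum>r'\<le>r. A r' c) = 0" if "r < m" "c < n" "c \<notin> {lam r..nu r}" for r c
  proof -
    have "outside r c = 0"
      using outside_0 that(1,2) by blast
    with that(3) show ?thesis
      by (simp add: outside_def split: if_splits)
  qed
qed

lemma pasm_array_column_prefix_indicator:
  assumes A: "pasm_array m n A" and first_row: "(\<Sum>c<n. A 0 c) = 1"
    and other_rows: "\<And>r. 0 < r \<Longrightarrow> r < m \<Longrightarrow> (\<Sum>c<n. A r c) = 0" and "r < m"
  obtains p where "p < n" "\<And>c. c < n \<Longrightarrow> (\<Sum>r'\<le>r. A r' c) = of_bool (c = p)"
proof -
  have "(\<Sum>c<n. \<Sum>r'\<le>r. A r' c) = (\<Sum>r'\<le>r. \<Sum>c<n. A r' c)"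
    by (rule sum.swap)
  also have "\<dots> = (\<Sum>r'\<in>{0}. \<Sum>c<n. A r' c)"
    using other_rows \<open>r < m\<close> by (intro sum.mono_neutral_right) auto
  finally have "(\<Sum>c<n. \<Sum>r'\<le>r. A r' c) = 1"
    using first_row by simp
  then show thesis
    using sum_zero_one_eq_one_obtains[of "{..<n}" "\<lambda>c. \<Sum>r'\<le>r. A r' c"]
      pasm_array_column_prefix[OF A \<open>r < m\<close>] that
    by auto
qed

lemma entry_eq_of_bool_diff:
  fixes A :: "nat \<Rightarrow> nat \<Rightarrow> real"
  assumes "\<And>r c. r < m \<Longrightarrow> c < n \<Longrightarrow> (\<Sum>r'\<le>r. A r' c) = of_bool (c = p r)"
    and "r < m" "c < n"
  shows "A r c = of_bool (c = p r) - of_bool (0 < r \<and> c = p (r - 1))"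
  using eq_column_prefix_diff[of A r c] assms by auto

lemma pasm_array_indicator_antimono:
  assumes A: "pasm_array m n A"
    and prefix: "\<And>r c. r < m \<Longrightarrow> c < n \<Longrightarrow> (\<Sum>r'\<le>r. A r' c) = of_bool (c = p r)"
    and p_n: "\<And>r. r < m \<Longrightarrow> p r < n" and "0 < r" "r < m"
  shows "p r \<le> p (r - 1)"
proof -
  let ?c = "p (r - 1)"
  have "?c < n" using p_n \<open>r < m\<close> by simp
  have "(\<Sum>c'\<le>?c. A r c') = (\<Sum>c'\<le>?c. of_bool (c' = p r) - of_bool (c' = ?c))"
    using entry_eq_of_bool_diff[OF prefix \<open>r < m\<close>] \<open>0 < r\<close> \<open>?c < n\<close>
    by (intro sum.cong) auto
  also have "\<dots> = of_bool (p r \<le> ?c) - 1"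
    by (simp add: sum_subtractf)
  finally show ?thesis
    using pasm_array_row_prefix[OF A \<open>r < m\<close> \<open>?c < n\<close>] by (cases "p r \<le> ?c") auto
qed

lemma skew_functional_eq_one_obtains_Mmu_entry:
  assumes A: "pasm_array m n A" and "0 < m" and f: "skew_functional m n lam nu A = 1"
    and lam_nu: "psubseteq lam nu" and nu_0: "\<And>r. m \<le> r \<Longrightarrow> nu r = 0"
  obtains mu where "is_partition mu" "psubseteq lam mu" "psubseteq mu nu"
    "\<And>r c. r < m \<Longrightarrow> c < n \<Longrightarrow> A r c = Mmu_entry mu r c"
proof -
  note first_row = skew_functional_eq_one_imp_first_row[OF A \<open>0 < m\<close> f]
    and other_rows = skew_functional_eq_one_imp_other_rows[OF A \<open>0 < m\<close> f]
  have "\<forall>r. \<exists>q. r < m \<longrightarrow> q < n \<and> (\<forall>c<n. (\<Sum>r'\<le>r. A r' c) = of_bool (c = q))"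
    using pasm_array_column_prefix_indicator[OF A first_row other_rows] by metis
  then obtain p where p_n: "\<And>r. r < m \<Longrightarrow> p r < n"
    and prefix: "\<And>r c. r < m \<Longrightarrow> c < n \<Longrightarrow> (\<Sum>r'\<le>r. A r' c) = of_bool (c = p r)"
    by metis
  define mu where "mu r = (if r < m then p r else 0)" for r
  have antimono: "p r \<le> p (r - 1)" if "0 < r" "r < m" for r
    using pasm_array_indicator_antimono[OF A prefix p_n that] .
  have inside: "lam r \<le> p r \<and> p r \<le> nu r" if "r < m" for r
    using skew_functional_eq_one_imp_outside[OF A \<open>0 < m\<close> f that p_n[OF that]]
      prefix[OF that p_n[OF that]] by auto
  have "is_partition mu"
    unfolding mu_def using antimono by (rule is_partition_truncate)
  moreover have "psubseteq lam mu" "psubseteq mu nu"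
    using inside lam_nu nu_0 unfolding psubseteq_def mu_def by (metis le_zero_eq not_le)+
  moreover have "A r c = Mmu_entry mu r c" if "r < m" "c < n" for r c
  proof -
    have "r - 1 < m" using that by simp
    then show ?thesis
      using entry_eq_of_bool_diff[OF prefix that] Mmu_entry_eq_diff[of r mu c] antimono[of r] that
      by (simp add: mu_def)
  qed
  ultimately show thesis using that by blast
qed

section \<open>The exposed face\<close>

lemma is_pasm_iff_pasm_array:
  fixes M :: "real^'n::{finite,linorder}^'m::{finite,linorder}"
  assumes M_A: "\<And>i j. M $ i $ j = A (rk i) (rk j)"
  shows "is_pasm M \<longleftrightarrow> pasm_array CARD('m) CARD('n) A"
proof -
  define P where "P r c \<longleftrightarrow> A r c \<in> {-1, 0, 1} \<and> (\<Sum>r'\<le>r. A r' c) \<in> {0, 1}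
      \<and> (\<Sum>c'\<le>c. A r c') \<in> {0, 1}" for r c
  have column: "(\<Sum>i'\<le>i. A (rk i') (rk j)) = (\<Sum>r'\<le>rk i. A r' (rk j))" for i j
    by (rule sum_atMost_rk)
  have row: "(\<Sum>j'\<le>j. A (rk i) (rk j')) = (\<Sum>c'\<le>rk j. A (rk i) c')" for i j
    by (rule sum_atMost_rk)
  have columns: "(\<forall>j::'n. P r (rk j)) \<longleftrightarrow> (\<forall>c<CARD('n). P r c)" for r
    by (rule all_rk_iff)
  have "is_pasm M \<longleftrightarrow> (\<forall>i::'m. \<forall>j::'n. P (rk i) (rk j))"
    unfolding is_pasm_def P_def M_A column row by blast
  also have "\<dots> \<longleftrightarrow> (\<forall>r<CARD('m). \<forall>j::'n. P r (rk j))"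
    by (rule all_rk_iff)
  also have "\<dots> \<longleftrightarrow> (\<forall>r<CARD('m). \<forall>c<CARD('n). P r c)"
    by (simp add: columns)
  also have "\<dots> \<longleftrightarrow> pasm_array CARD('m) CARD('n) A"
    unfolding pasm_array_def P_def ..
  finally show ?thesis .
qed

definition mat_array :: "real^'n::{finite,linorder}^'m::{finite,linorder} \<Rightarrow> nat \<Rightarrow> nat \<Rightarrow> real" where
  "mat_array M = (\<lambda>r c. M $ inv rk r $ inv rk c)"

lemma mat_array_rk [simp]: "mat_array M (rk i) (rk j) = M $ i $ j"
  by (simp add: mat_array_def inv_f_f[OF inj_rk])

lemma mat_array_Mmu:
  "r < CARD('m) \<Longrightarrow> c < CARD('n) \<Longrightarrow>
     mat_array (Mmu mu :: real^'n::{finite,linorder}^'m::{finite,linorder}) r c = Mmu_entry mu r c"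
  by (simp add: mat_array_def Mmu_def rk_inv_rk)

lemma Mmu_nth: "(Mmu mu :: real^'n::{finite,linorder}^'m::{finite,linorder}) $ i $ j = Mmu_entry mu (rk i) (rk j)"
  by (simp add: Mmu_def)

definition skew_form :: "(nat \<Rightarrow> nat) \<Rightarrow> (nat \<Rightarrow> nat) \<Rightarrow> real^'n::{finite,linorder}^'m::{finite,linorder} \<Rightarrow> real" where
  "skew_form lam nu M = skew_functional CARD('m) CARD('n) lam nu (mat_array M)"

lemma skew_functional_lincomb:
  "skew_functional m n lam nu (\<lambda>r c. x * A r c + y * B r c)
     = x * skew_functional m n lam nu A + y * skew_functional m n lam nu B"
proof -
  have "(if c \<in> {lam r..nu r} then 0 else \<Sum>r'\<le>r. x * A r' c + y * B r' c)
     = x * (if c \<in> {lam r..nu r} then 0 else \<Sum>r'\<le>r. A r' c)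
       + y * (if c \<in> {lam r..nu r} then 0 else \<Sum>r'\<le>r. B r' c)" for r c
    by (simp add: sum.distrib sum_distrib_left)
  then show ?thesis
    unfolding skew_functional_def by (simp add: sum.distrib sum_distrib_left algebra_simps)
qed

lemma linear_skew_form: "linear (skew_form lam nu)"
proof (rule linearI)
  fix M N :: "real^'n::{finite,linorder}^'m::{finite,linorder}" and t :: real
  show "skew_form lam nu (M + N) = skew_form lam nu M + skew_form lam nu N"
    using skew_functional_lincomb[of "CARD('m)" "CARD('n)" lam nu 1 "mat_array M" 1 "mat_array N"]
    by (simp add: skew_form_def mat_array_def)
  show "skew_form lam nu (t *\<^sub>R M) = t *\<^sub>R skew_form lam nu M"
    using skew_functional_lincomb[of "CARD('m)" "CARD('n)" lam nu t "mat_array M" 0 "mat_array M"]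
    by (simp add: skew_form_def mat_array_def)
qed

lemma skew_functional_cong:
  assumes "0 < m" and "\<And>r c. r < m \<Longrightarrow> c < n \<Longrightarrow> A r c = B r c"
  shows "skew_functional m n lam nu A = skew_functional m n lam nu B"
  unfolding skew_functional_def using assms by (auto intro!: sum.cong arg_cong2[where f="(-)"])

lemma skew_form_Mmu:
  "skew_form lam nu (Mmu mu :: real^'n::{finite,linorder}^'m::{finite,linorder})
     = skew_functional CARD('m) CARD('n) lam nu (Mmu_entry mu)"
  unfolding skew_form_def by (rule skew_functional_cong) (simp_all add: mat_array_Mmu)

definition skew_partitions :: "(nat \<Rightarrow> nat) \<Rightarrow> (nat \<Rightarrow> nat) \<Rightarrow> (nat \<Rightarrow> nat) set" where
  "skew_partitions lam nu = {mu. is_partition mu \<and> psubseteq lam mu \<and> psubseteq mu nu}"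

lemma PASM_skew_eq: "PASM_skew lam nu = convex hull (Mmu ` skew_partitions lam nu)"
  unfolding PASM_skew_def skew_partitions_def by (simp add: setcompr_eq_image)

lemma Mmu_image_skew_partitions:
  assumes nu: "is_partition nu" and lam_nu: "psubseteq lam nu"
    and rect: "in_rect nu (CARD('n::{finite,linorder}) - 1) (CARD('m::{finite,linorder}) - 1)"
  shows "(Mmu ` skew_partitions lam nu :: (real^'n::{finite,linorder}^'m::{finite,linorder}) set)
    = {M. is_pasm M} \<inter> {M. skew_form lam nu M = 1}"
proof (intro equalityI subsetI)
  fix M :: "real^'n::{finite,linorder}^'m::{finite,linorder}"
  assume "M \<in> Mmu ` skew_partitions lam nu"
  then obtain mu where M: "M = Mmu mu" and mu: "is_partition mu" "psubseteq lam mu" "psubseteq mu nu"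
    unfolding skew_partitions_def by blast
  have "mu 0 < CARD('n)"
    using mu(3) in_rect_partition_le[OF nu rect, of 0] unfolding psubseteq_def
    by (metis Suc_pred' le_imp_less_Suc order_trans zero_less_card_finite)
  then have "skew_form lam nu M = 1"
    unfolding M skew_form_Mmu by (rule skew_functional_Mmu_entry[OF mu(1-3)])
  moreover have "is_pasm M"
    unfolding M by (rule is_pasm_iff_pasm_array[OF Mmu_nth, THEN iffD2]) (rule pasm_array_Mmu_entry[OF mu(1)])
  ultimately show "M \<in> {M. is_pasm M} \<inter> {M. skew_form lam nu M = 1}" by simp
next
  fix M :: "real^'n::{finite,linorder}^'m::{finite,linorder}"
  assume "M \<in> {M. is_pasm M} \<inter> {M. skew_form lam nu M = 1}"
  then have A: "pasm_array CARD('m) CARD('n) (mat_array M)"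
    and f: "skew_functional CARD('m) CARD('n) lam nu (mat_array M) = 1"
    using is_pasm_iff_pasm_array[of M "mat_array M"] by (auto simp: skew_form_def)
  have nu_0: "nu r = 0" if "CARD('m) \<le> r" for r
    using in_rect_partition_eq_0[OF nu rect] that by simp
  obtain mu where mu: "is_partition mu" "psubseteq lam mu" "psubseteq mu nu"
    and entries: "\<And>r c. r < CARD('m) \<Longrightarrow> c < CARD('n) \<Longrightarrow> mat_array M r c = Mmu_entry mu r c"
    using skew_functional_eq_one_obtains_Mmu_entry[OF A _ f lam_nu nu_0] by auto
  have "M = Mmu mu"
    unfolding vec_eq_iff Mmu_nth using entries[OF rk_less_card rk_less_card] by simp
  with mu show "M \<in> Mmu ` skew_partitions lam nu"
    unfolding skew_partitions_def by blast
qed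

lemma PASM_skew_face_of_PASM:
  assumes "is_partition nu" and "psubseteq lam nu"
    and "in_rect nu (CARD('n::{finite,linorder}) - 1) (CARD('m::{finite,linorder}) - 1)"
  shows "(PASM_skew lam nu :: (real^'n::{finite,linorder}^'m::{finite,linorder}) set) face_of PASM"
proof -
  define a :: "real^'n::{finite,linorder}^'m::{finite,linorder}" where "a = adjoint (skew_form lam nu) 1"
  have a: "skew_form lam nu M = a \<bullet> M" for M
    using adjoint_clauses(2)[OF linear_skew_form[of lam nu], of 1 M] by (simp add: a_def)
  have "a \<bullet> M \<le> 1" if "is_pasm M" for M
    using skew_functional_le_one[of "CARD('m)" "CARD('n)" "mat_array M"] that
      is_pasm_iff_pasm_array[of M "mat_array M"]
    by (simp add: a[symmetric] skew_form_def)
  then have "convex hull ({M. is_pasm M} \<inter> {M. a \<bullet> M = 1}) face_of PASM"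
    unfolding PASM_def by (intro face_of_convex_hull_Int_supporting_hyperplane) simp
  then show ?thesis
    using Mmu_image_skew_partitions[OF assms] by (simp add: PASM_skew_eq a)
qed

section \<open>Dimension\<close>

definition corner_sums ::
  "real^'n::{finite,linorder}^'m::{finite,linorder} \<Rightarrow> real^'n::{finite,linorder}^'m::{finite,linorder}" where
  "corner_sums M = (\<chi> i j. \<Sum>i'\<le>i. \<Sum>j'\<le>j. M $ i' $ j')"

lemma linear_corner_sums: "linear corner_sums"
  by (rule linearI) (simp_all add: corner_sums_def vec_eq_iff sum.distrib sum_distrib_left)

lemma eq_0_if_prefix_sums_eq_0:
  fixes g :: "'a::{finite,linorder} \<Rightarrow> 'b::comm_monoid_add"
  assumes "\<And>y. (\<Sum>z\<le>y. g z) = 0"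
  shows "g x = 0"
proof (cases "{..<x} = {}")
  case True
  then have "{..x} = {x}"
    by (auto simp: le_less)
  then show ?thesis using assms[of x] by simp
next
  case False
  define y where "y = Max {..<x}"
  have "y < x"
    using Max_in[OF finite False] unfolding y_def by simp
  have below: "z \<le> y" if "z < x" for z
    using that unfolding y_def by (simp add: Max_ge)
  have "z \<le> x \<longleftrightarrow> z = x \<or> z \<le> y" for z
    using below[of z] \<open>y < x\<close> by (meson le_less order.trans)
  then have "{..x} = insert x {..y}"
    by auto
  then have "(\<Sum>z\<le>x. g z) = g x + (\<Sum>z\<le>y. g z)"
    using \<open>y < x\<close> by simp
  then show ?thesis using assms by simp
qed

lemma inj_corner_sums: "inj (corner_sums :: real^'n::{finite,linorder}^'m::{finite,linorder} \<Rightarrow> _)"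
  unfolding linear_injective_0[OF linear_corner_sums]
proof (intro allI impI)
  fix M :: "real^'n::{finite,linorder}^'m::{finite,linorder}"
  assume "corner_sums M = 0"
  then have "corner_sums M $ i $ j = 0" for i j
    by simp
  then have "(\<Sum>i'\<le>i. \<Sum>j'\<le>j. M $ i' $ j') = 0" for i j
    by (simp add: corner_sums_def)
  then have "(\<Sum>j'\<le>j. \<Sum>i'\<le>i. M $ i' $ j') = 0" for i j
    using sum.swap[of "\<lambda>i' j'. M $ i' $ j'" "{..j}" "{..i}"] by simp
  then have "(\<Sum>i'\<le>i. M $ i' $ j) = 0" for i j
    by (rule eq_0_if_prefix_sums_eq_0[of "\<lambda>j. \<Sum>i'\<le>i. M $ i' $ j"])
  then have "M $ i $ j = 0" for i j
    by (rule eq_0_if_prefix_sums_eq_0[of "\<lambda>i. M $ i $ j"])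
  then show "M = 0"
    by (simp add: vec_eq_iff)
qed

definition diagram_complement :: "(nat \<Rightarrow> nat) \<Rightarrow> real^'n::{finite,linorder}^'m::{finite,linorder}" where
  "diagram_complement mu = (\<chi> i j. of_bool (mu (rk i) \<le> rk j))"

lemma corner_sums_Mmu:
  assumes "is_partition mu"
  shows "corner_sums (Mmu mu :: real^'n::{finite,linorder}^'m::{finite,linorder}) = diagram_complement mu"
proof -
  have inner: "(\<Sum>j'\<le>j. Mmu_entry mu r (rk j')) = (\<Sum>c'\<le>rk j. Mmu_entry mu r c')"
    for r and j :: "'n::{finite,linorder}"
    by (rule sum_atMost_rk)
  have outer: "(\<Sum>i'\<le>i. \<Sum>c'\<le>rk j. Mmu_entry mu (rk i') c')
      = (\<Sum>r'\<le>rk i. \<Sum>c'\<le>rk j. Mmu_entry mu r' c')"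
    for i :: "'m::{finite,linorder}" and j :: "'n::{finite,linorder}"
    by (rule sum_atMost_rk[of "\<lambda>r. \<Sum>c'\<le>rk j. Mmu_entry mu r c'"])
  show ?thesis
    unfolding corner_sums_def diagram_complement_def Mmu_nth inner outer sum_Mmu_entry_corner[OF assms] ..
qed

definition unit_mat :: "'m::finite \<Rightarrow> 'n::finite \<Rightarrow> real^'n^'m" where
  "unit_mat i j = axis i (axis j 1)"

lemma unit_mat_nth: "unit_mat i j $ i' $ j' = of_bool ((i', j') = (i, j))"
  by (simp add: unit_mat_def axis_def)

lemma unit_mat_in_Basis: "unit_mat i j \<in> Basis"
  by (auto simp: unit_mat_def Basis_vec_def)

lemma unit_mat_eq_iff: "unit_mat i j = unit_mat i' j' \<longleftrightarrow> i = i' \<and> j = j'"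
  by (auto simp: unit_mat_def axis_eq_axis)

lemma sum_unit_mat_nth:
  "(\<Sum>(i, j)\<in>C. unit_mat i j) $ i' $ j' = of_bool ((i', j') \<in> C)"
proof -
  have "(\<Sum>(i, j)\<in>C. unit_mat i j) $ i' $ j' = (\<Sum>p\<in>C. of_bool (p = (i', j')) :: real)"
    unfolding sum_component by (intro sum.cong) (auto simp: unit_mat_nth split: prod.splits)
  also have "\<dots> = of_bool ((i', j') \<in> C)"
    by simp
  finally show ?thesis .
qed

definition skew_cells :: "(nat \<Rightarrow> nat) \<Rightarrow> (nat \<Rightarrow> nat) \<Rightarrow> ('m::{finite,linorder} \<times> 'n::{finite,linorder}) set" where
  "skew_cells lam mu = {(i, j). lam (rk i) \<le> rk j \<and> rk j < mu (rk i)}"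

lemma diagram_complement_diff:
  assumes "psubseteq lam mu"
  shows "diagram_complement lam - diagram_complement mu
    = (\<Sum>(i, j)\<in>skew_cells lam mu. unit_mat i j :: real^'n::{finite,linorder}^'m::{finite,linorder})"
  unfolding vec_eq_iff
proof (intro allI)
  fix i :: "'m::{finite,linorder}" and j :: "'n::{finite,linorder}"
  have "lam (rk i) \<le> mu (rk i)"
    using assms unfolding psubseteq_def by blast
  then show "(diagram_complement lam - diagram_complement mu) $ i $ j
    = (\<Sum>(i, j)\<in>skew_cells lam mu. unit_mat i j :: real^'n::{finite,linorder}^'m::{finite,linorder}) $ i $ j"
    unfolding sum_unit_mat_nth by (auto simp: diagram_complement_def skew_cells_def)
qed

lemma step_partition_in_skew_partitions:
  assumes lam: "is_partition lam" and nu: "is_partition nu" and lam_nu: "psubseteq lam nu"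
    and "lam a \<le> t" "t \<le> s" "s \<le> nu a"
  shows "(\<lambda>k. if k < a then max (lam k) s else if k = a then t else lam k) \<in> skew_partitions lam nu"
    (is "?mu \<in> _")
proof -
  have lam_anti: "lam k' \<le> lam k" if "k \<le> k'" for k k'
    using is_partition_antimono[OF lam that] .
  have lam_finite: "finite {k. lam k \<noteq> 0}"
    using lam unfolding is_partition_def by blast
  have "?mu k' \<le> ?mu k" if "k \<le> k'" for k k'
    using that assms(4,5) lam_anti[of k k'] lam_anti[of a k'] by auto
  moreover have "finite {k. ?mu k \<noteq> 0}"
    by (rule finite_subset[of _ "{..a} \<union> {k. lam k \<noteq> 0}"]) (use lam_finite in auto)
  moreover have "lam k \<le> ?mu k" for k
    using assms(4) by auto
  moreover have "?mu k \<le> nu k" for k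
    using lam_nu assms(5,6) is_partition_antimono[OF nu, of k a] unfolding psubseteq_def
    by (cases "k \<le> a") auto
  ultimately show ?thesis
    unfolding skew_partitions_def is_partition_def psubseteq_def by blast
qed

lemma span_diagram_complement_diffs:
  assumes lam: "is_partition lam" and nu: "is_partition nu" and lam_nu: "psubseteq lam nu"
  shows "span ((\<lambda>mu. diagram_complement mu - diagram_complement lam) ` skew_partitions lam nu)
    = span ((\<lambda>(i, j). unit_mat i j) ` skew_cells lam nu
        :: (real^'n::{finite,linorder}^'m::{finite,linorder}) set)"
    (is "span ?D = span ?U")
proof (rule span_eq[THEN iffD2], rule conjI)
  show "?D \<subseteq> span ?U"
  proof
    fix v assume "v \<in> ?D"
    then obtain mu where mu: "mu \<in> skew_partitions lam nu"
      and v: "v = diagram_complement mu - diagram_complement lam"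
      by blast
    then have "v = - (\<Sum>(i, j)\<in>skew_cells lam mu. unit_mat i j)"
      by (simp add: diagram_complement_diff[symmetric] skew_partitions_def)
    moreover have "skew_cells lam mu \<subseteq> (skew_cells lam nu :: ('m::{finite,linorder} \<times> 'n::{finite,linorder}) set)"
      using mu unfolding skew_partitions_def psubseteq_def skew_cells_def
      by (auto intro: order.strict_trans2)
    then have "(\<Sum>(i, j)\<in>skew_cells lam mu. unit_mat i j) \<in> span ?U"
      by (intro span_sum span_base imageI) auto
    ultimately show "v \<in> span ?U"
      by (simp add: span_neg)
  qed
  show "?U \<subseteq> span ?D"
  proof
    fix v assume "v \<in> ?U"
    then obtain i j where ij: "(i, j) \<in> skew_cells lam nu" and v: "v = unit_mat i j"
      by auto
    define mu where "mu t k = (if k < rk i then max (lam k) (Suc (rk j)) else if k = rk i then t else lam k)"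
      for t k
    have "lam (rk i) \<le> rk j" "rk j < nu (rk i)"
      using ij unfolding skew_cells_def by auto
    then have in_skew: "mu (rk j) \<in> skew_partitions lam nu" "mu (Suc (rk j)) \<in> skew_partitions lam nu"
      unfolding mu_def by (auto intro!: step_partition_in_skew_partitions[OF lam nu lam_nu])
    have "v = diagram_complement (mu (rk j)) - diagram_complement (mu (Suc (rk j)))"
      unfolding vec_eq_iff v
    proof (intro allI)
      fix i' j'
      have rk_eq: "rk i' = rk i \<longleftrightarrow> i' = i" "rk j' = rk j \<longleftrightarrow> j' = j"
        by (simp_all add: strict_mono_eq[OF strict_mono_rk])
      show "unit_mat i j $ i' $ j'
        = (diagram_complement (mu (rk j)) - diagram_complement (mu (Suc (rk j)))
            :: real^'n::{finite,linorder}^'m::{finite,linorder}) $ i' $ j'"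
        using rk_eq by (cases "i' = i") (auto simp: unit_mat_nth diagram_complement_def mu_def)
    qed
    moreover have "diagram_complement (mu t) - diagram_complement lam \<in> span ?D"
      if "mu t \<in> skew_partitions lam nu" for t
      using that by (intro span_base imageI)
    ultimately show "v \<in> span ?D"
      using span_diff[of "diagram_complement (mu (rk j)) - diagram_complement lam" ?D
          "diagram_complement (mu (Suc (rk j))) - diagram_complement lam"] in_skew
      by simp
  qed
qed

lemma card_skew_cells:
  assumes "psubseteq lam nu" and "\<And>r. nu r \<le> CARD('n::{finite,linorder})"
  shows "card (skew_cells lam nu :: ('m::{finite,linorder} \<times> 'n::{finite,linorder}) set) = (\<Sum>r<CARD('m::{finite,linorder}). nu r - lam r)"
proof -
  have "skew_cells lam nu = Sigma (UNIV :: 'm::{finite,linorder} set) (\<lambda>i. {j::'n::{finite,linorder}. lam (rk i) \<le> rk j \<and> rk j < nu (rk i)})"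
    unfolding skew_cells_def by auto
  then have "card (skew_cells lam nu :: ('m::{finite,linorder} \<times> 'n::{finite,linorder}) set)
      = (\<Sum>i\<in>(UNIV :: 'm::{finite,linorder} set). card {j::'n::{finite,linorder}. lam (rk i) \<le> rk j \<and> rk j < nu (rk i)})"
    by (simp add: card_SigmaI)
  also have "\<dots> = (\<Sum>i\<in>(UNIV :: 'm::{finite,linorder} set). nu (rk i) - lam (rk i))"
    using assms(2) by (simp add: card_rk_interval)
  also have "\<dots> = (\<Sum>r<CARD('m::{finite,linorder}). nu r - lam r)"
    by (rule sum_UNIV_rk)
  finally show ?thesis .
qed

lemma aff_dim_PASM_skew:
  assumes lam: "is_partition lam" and nu: "is_partition nu" and lam_nu: "psubseteq lam nu"
    and rect: "in_rect nu (CARD('n::{finite,linorder}) - 1) (CARD('m::{finite,linorder}) - 1)"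
  shows "aff_dim (PASM_skew lam nu :: (real^'n::{finite,linorder}^'m::{finite,linorder}) set)
    = int (psize nu) - int (psize lam)"
proof -
  let ?D = "diagram_complement :: _ \<Rightarrow> real^'n::{finite,linorder}^'m::{finite,linorder}"
  let ?U = "(\<lambda>(i, j). unit_mat i j) ` skew_cells lam nu :: (real^'n::{finite,linorder}^'m::{finite,linorder}) set"
  have lam_le_nu: "lam r \<le> nu r" for r
    using lam_nu unfolding psubseteq_def by blast
  have nu_0: "nu r = 0" if "CARD('m::{finite,linorder}) \<le> r" for r
    using in_rect_partition_eq_0[OF nu rect] that by simp
  have lam_0: "lam r = 0" if "CARD('m) \<le> r" for r
    using nu_0[OF that] lam_le_nu[of r] by simp
  have nu_n: "nu r \<le> CARD('n::{finite,linorder})" for r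
    using in_rect_partition_le[OF nu rect, of r] by simp
  have "lam \<in> skew_partitions lam nu"
    using lam lam_nu unfolding skew_partitions_def psubseteq_def by simp
  then have "?D lam \<in> affine hull (?D ` skew_partitions lam nu)"
    by (simp add: hull_inc)
  have "aff_dim (PASM_skew lam nu :: (real^'n::{finite,linorder}^'m::{finite,linorder}) set)
      = aff_dim (corner_sums ` Mmu ` skew_partitions lam nu :: (real^'n::{finite,linorder}^'m::{finite,linorder}) set)"
    unfolding PASM_skew_eq aff_dim_convex_hull
    by (rule aff_dim_injective_linear_image[OF linear_corner_sums inj_corner_sums, symmetric])
  also have "corner_sums ` Mmu ` skew_partitions lam nu = ?D ` skew_partitions lam nu"
    unfolding image_image by (rule image_cong) (simp_all add: corner_sums_Mmu skew_partitions_def)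
  also have "aff_dim (?D ` skew_partitions lam nu)
      = int (dim ((\<lambda>mu. ?D mu - ?D lam) ` skew_partitions lam nu))"
    using aff_dim_eq_dim_subtract[OF \<open>?D lam \<in> _\<close>] by (simp add: image_image)
  also have "dim ((\<lambda>mu. ?D mu - ?D lam) ` skew_partitions lam nu) = card ?U"
  proof (rule dim_eq_card)
    show "span ?U = span ((\<lambda>mu. ?D mu - ?D lam) ` skew_partitions lam nu)"
      by (rule span_diagram_complement_diffs[OF lam nu lam_nu, symmetric])
    show "independent ?U"
      by (rule independent_mono[OF independent_Basis]) (auto simp: unit_mat_in_Basis)
  qed
  also have "card ?U = card (skew_cells lam nu :: ('m::{finite,linorder} \<times> 'n::{finite,linorder}) set)"
    by (rule card_image) (auto simp: inj_on_def unit_mat_eq_iff)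
  also have "\<dots> = (\<Sum>r<CARD('m::{finite,linorder}). nu r - lam r)"
    using lam_nu nu_n by (rule card_skew_cells)
  also have "int \<dots> = int (\<Sum>r<CARD('m::{finite,linorder}). nu r) - int (\<Sum>r<CARD('m::{finite,linorder}). lam r)"
    using lam_le_nu by (simp add: of_nat_diff sum_subtractf sum_mono)
  also have "\<dots> = int (psize nu) - int (psize lam)"
    using psize_eq_sum_lessThan[of "CARD('m)" nu, OF nu_0]
      psize_eq_sum_lessThan[of "CARD('m)" lam, OF lam_0] by simp
  finally show ?thesis .
qed

theorem theorem2:
  fixes lam nu :: "nat \<Rightarrow> nat"
  assumes "is_partition lam" and "is_partition nu"
    and "psubseteq lam nu"
    and "in_rect nu (CARD('n::{finite,linorder}) - 1) (CARD('m::{finite,linorder}) - 1)"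
  shows "(PASM_skew lam nu :: (real^'n::{finite,linorder}^'m::{finite,linorder}) set) face_of PASM \<and>
      aff_dim (PASM_skew lam nu :: (real^'n::{finite,linorder}^'m::{finite,linorder}) set) = int (psize nu) - int (psize lam)"
  using PASM_skew_face_of_PASM[OF assms(2-4)] aff_dim_PASM_skew[OF assms] by simp

end
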